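(* Let $\Pi$ be a $\rho$-local problem, let $g\ge1$ and $T\ge0$ be integers, and let $G$ be a graph of Euler genus at most $g$. Let $X=\{u\in V(G): G[N^T[u]]\text{ is not planar}\}$. Then every connected component of $G[N^{2\rho}[X]]$ has weak diameter in $G$ strictly less than $g\,(2T+4\rho+1)$. In particular, the class of graphs of Euler genus at most $g$ is $T$-locally $\delta$-nice with respect to the class of planar graphs and $\Pi$ for some $\delta<g(2T+4\rho+1)$.
   Context: $N^t[S]$ is the set of vertices at distance at most $t$ from $S$ in $G$. The weak diameter in $G$ of $Z\subseteq V(G)$ is the maximum $G$-distance between two vertices of $Z$. Euler genus of a graph: minimum Euler genus of a surface on which it embeds. A class $\mathscr{D}$ is $T$-locally $\delta$-nice w.r.t. a class $\mathscr{C}$ and a $\rho$-local problem if for every $G\in\mathscr{D}$, with $X=\{u: G[N^T[u]]\notin\mathscr{C}\}$, every connected component of $G[N^{2\rho}[X]]$ has weak diameter in $G$ at most $\delta$. ($\rho$ is a non-negative integer; the problem itself plays no role beyond $\rho$.) *)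

theory Defs
  imports Main "HOL-Library.Extended_Nat"
begin

definition sgraph :: "'a set \<Rightarrow> ('a \<times> 'a) set \<Rightarrow> bool" where
  "sgraph V E \<longleftrightarrow> finite V \<and> E \<subseteq> V \<times> V \<and> sym E \<and> (\<forall>x. (x, x) \<notin> E)"

definition gdist :: "('a \<times> 'a) set \<Rightarrow> 'a \<Rightarrow> 'a \<Rightarrow> enat" where
  "gdist E u v = (if \<exists>n. (u, v) \<in> E ^^ n then enat (LEAST n. (u, v) \<in> E ^^ n) else \<infinity>)"

definition nbhd :: "'a set \<Rightarrow> ('a \<times> 'a) set \<Rightarrow> nat \<Rightarrow> 'a set \<Rightarrow> 'a set" where
  "nbhd V E t S = {v \<in> V. \<exists>u\<in>S. gdist E u v \<le> enat t}"

definition induced :: "('a \<times> 'a) set \<Rightarrow> 'a set \<Rightarrow> ('a \<times> 'a) set" where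
  "induced E S = E \<inter> (S \<times> S)"

definition components :: "'a set \<Rightarrow> ('a \<times> 'a) set \<Rightarrow> 'a set set" where
  "components V E = {C. \<exists>v\<in>V. C = {w \<in> V. (v, w) \<in> E\<^sup>*}}"

definition weak_diam :: "('a \<times> 'a) set \<Rightarrow> 'a set \<Rightarrow> enat" where
  "weak_diam E Z = Sup {gdist E u v | u v. u \<in> Z \<and> v \<in> Z}"

text \<open>Surfaces are not available in Isabelle/HOL, so embeddings are encoded
combinatorially by generalized maps: a finite set of flags with three
fixed-point-free involutions a0, a1, a2, where a0 and a2 commute and
a0 a2 is fixed-point-free. Vertices, edges, faces and surface components are
the orbits of <a1,a2>, <a0,a2>, <a0,a1> and <a0,a1,a2> respectively.\<close>

definition orbit :: "('b \<Rightarrow> 'b) list \<Rightarrow> 'b \<Rightarrow> 'b set" where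
  "orbit fs x = {y. (x, y) \<in> {(z, f z) | z f. f \<in> set fs}\<^sup>*}"

definition orbits :: "'b set \<Rightarrow> ('b \<Rightarrow> 'b) list \<Rightarrow> 'b set set" where
  "orbits \<Phi> fs = orbit fs ` \<Phi>"

definition invol_on :: "'b set \<Rightarrow> ('b \<Rightarrow> 'b) \<Rightarrow> bool" where
  "invol_on \<Phi> f \<longleftrightarrow> (\<forall>x\<in>\<Phi>. f x \<in> \<Phi> \<and> f x \<noteq> x \<and> f (f x) = x)"

definition gem :: "nat set \<Rightarrow> (nat \<Rightarrow> nat) \<Rightarrow> (nat \<Rightarrow> nat) \<Rightarrow> (nat \<Rightarrow> nat) \<Rightarrow> bool" where
  "gem \<Phi> a0 a1 a2 \<longleftrightarrow> finite \<Phi> \<and> invol_on \<Phi> a0 \<and> invol_on \<Phi> a1 \<and> invol_on \<Phi> a2 \<and>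
     (\<forall>x\<in>\<Phi>. a0 (a2 x) = a2 (a0 x) \<and> a0 x \<noteq> a2 x)"

text \<open>The gem, via the vertex labelling nu, is an embedding of the graph (V,E)
(isolated vertices, which carry no flags, are placed anywhere): vertex orbits
correspond bijectively to the non-isolated vertices and edge orbits
bijectively to the edges.\<close>

definition gem_embeds :: "'a set \<Rightarrow> ('a \<times> 'a) set \<Rightarrow> nat set \<Rightarrow> (nat \<Rightarrow> nat) \<Rightarrow> (nat \<Rightarrow> nat)
    \<Rightarrow> (nat \<Rightarrow> nat) \<Rightarrow> (nat \<Rightarrow> 'a) \<Rightarrow> bool" where
  "gem_embeds V E \<Phi> a0 a1 a2 \<nu> \<longleftrightarrow> gem \<Phi> a0 a1 a2 \<and>
     (\<forall>x\<in>\<Phi>. \<nu> x \<in> V \<and> \<nu> (a1 x) = \<nu> x \<and> \<nu> (a2 x) = \<nu> x \<and> (\<nu> x, \<nu> (a0 x)) \<in> E) \<and>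
     (\<forall>x\<in>\<Phi>. \<forall>y\<in>\<Phi>. \<nu> x = \<nu> y \<longrightarrow> y \<in> orbit [a1, a2] x) \<and>
     (\<forall>x\<in>\<Phi>. \<forall>y\<in>\<Phi>. {\<nu> x, \<nu> (a0 x)} = {\<nu> y, \<nu> (a0 y)} \<longrightarrow> y \<in> orbit [a0, a2] x) \<and>
     (\<forall>(u, v)\<in>E. \<exists>x\<in>\<Phi>. \<nu> x = u \<and> \<nu> (a0 x) = v)"

text \<open>Euler genus of the (possibly disconnected) surface described by a gem:
sum over its components of 2 - (v - e + f).\<close>
definition gem_euler_genus :: "nat set \<Rightarrow> (nat \<Rightarrow> nat) \<Rightarrow> (nat \<Rightarrow> nat) \<Rightarrow> (nat \<Rightarrow> nat) \<Rightarrow> int" where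
  "gem_euler_genus \<Phi> a0 a1 a2 =
     2 * int (card (orbits \<Phi> [a0, a1, a2])) - int (card (orbits \<Phi> [a1, a2]))
       + int (card (orbits \<Phi> [a0, a2])) - int (card (orbits \<Phi> [a0, a1]))"

definition euler_genus_le :: "'a set \<Rightarrow> ('a \<times> 'a) set \<Rightarrow> nat \<Rightarrow> bool" where
  "euler_genus_le V E k \<longleftrightarrow>
     (\<exists>\<Phi> a0 a1 a2 \<nu>. gem_embeds V E \<Phi> a0 a1 a2 \<nu> \<and> gem_euler_genus \<Phi> a0 a1 a2 \<le> int k)"

definition planar :: "'a set \<Rightarrow> ('a \<times> 'a) set \<Rightarrow> bool" where
  "planar V E \<longleftrightarrow> euler_genus_le V E 0"

definition locally_nice ::
  "nat \<Rightarrow> nat \<Rightarrow> nat \<Rightarrow> ('a set \<times> ('a \<times> 'a) set) set \<Rightarrow> ('a set \<times> ('a \<times> 'a) set) set \<Rightarrow> bool" where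
  "locally_nice T \<delta> \<rho> D C \<longleftrightarrow>
     (\<forall>(V, E)\<in>D.
        let X = {u \<in> V. (nbhd V E T {u}, induced E (nbhd V E T {u})) \<notin> C};
            N = nbhd V E (2 * \<rho>) X
        in \<forall>K \<in> components N (induced E N). weak_diam E K \<le> enat \<delta>)"

end

(* Suppose a component of the 2\<rho>-neighbourhood of the non-planar region contained two vertices
   at distance at least g s, where s = 2T + 4\<rho> + 1. Walking inside the component from one to the
   other we meet vertices at distance exactly 0, s, ..., g s from the start, each within 2\<rho> of a
   vertex whose T-ball is non-planar; as s > 2T + 4\<rho>, these g + 1 non-planar balls are pairwise
   disjoint. But a graph of Euler genus at most g has no g + 1 disjoint non-planar induced
   subgraphs: deleting edges does not increase the Euler genus, and the Euler genus of a disjoint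
   union is the sum of the Euler genera. On gems, deleting an edge reroutes the involution a1
   around the four darts of the edge, and the change of 2c - v + e - f is counted directly. *)

theory Submission
  imports Defs "HOL-Library.Disjoint_Sets"
begin

definition orbit_rel :: "('b \<Rightarrow> 'b) list \<Rightarrow> ('b \<times> 'b) set" where
  "orbit_rel fs = {(z, f z) | z f. f \<in> set fs}"

lemma orbit_eq_rtrancl: "orbit fs x = {y. (x, y) \<in> (orbit_rel fs)\<^sup>*}"
  by (simp add: orbit_def orbit_rel_def)

lemma orbit_refl [simp]: "x \<in> orbit fs x"
  by (simp add: orbit_eq_rtrancl)

lemma orbit_closed: "f \<in> set fs \<Longrightarrow> y \<in> orbit fs x \<Longrightarrow> f y \<in> orbit fs x"
  unfolding orbit_eq_rtrancl orbit_rel_def by (auto intro: rtrancl_into_rtrancl)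

lemma orbit_trans: "y \<in> orbit fs x \<Longrightarrow> z \<in> orbit fs y \<Longrightarrow> z \<in> orbit fs x"
  unfolding orbit_eq_rtrancl by auto

lemma orbit_least:
  assumes "x \<in> S" "\<And>f w. f \<in> set fs \<Longrightarrow> w \<in> S \<Longrightarrow> f w \<in> S"
  shows "orbit fs x \<subseteq> S"
proof
  fix y assume "y \<in> orbit fs x"
  then have "(x, y) \<in> (orbit_rel fs)\<^sup>*" by (simp add: orbit_eq_rtrancl)
  then show "y \<in> S"
    by (induction rule: rtrancl_induct) (auto simp: orbit_rel_def assms)
qed

lemma orbit_mono: "set fs \<subseteq> set gs \<Longrightarrow> orbit fs x \<subseteq> orbit gs x"
  by (rule orbit_least) (auto intro: orbit_closed)

lemma orbit_cong:
  assumes "\<And>w g. w \<in> orbit fs x \<Longrightarrow> g \<in> set gs \<Longrightarrow> \<exists>f\<in>set fs. g w = f w"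
      and "\<And>w f. w \<in> orbit fs x \<Longrightarrow> f \<in> set fs \<Longrightarrow> \<exists>g\<in>set gs. g w = f w"
  shows "orbit gs x = orbit fs x"
proof
  show "orbit gs x \<subseteq> orbit fs x"
  proof (rule orbit_least)
    fix g w assume "g \<in> set gs" "w \<in> orbit fs x"
    then obtain f where "f \<in> set fs" "g w = f w" using assms(1) by blast
    then show "g w \<in> orbit fs x" using orbit_closed[OF _ \<open>w \<in> orbit fs x\<close>] by simp
  qed simp
  show "orbit fs x \<subseteq> orbit gs x"
  proof
    fix y assume "y \<in> orbit fs x"
    then have "(x, y) \<in> (orbit_rel fs)\<^sup>*" by (simp add: orbit_eq_rtrancl)
    then show "y \<in> orbit gs x"
    proof (induction rule: rtrancl_induct)
      case (step y z)
      then obtain f where f: "f \<in> set fs" "z = f y" by (auto simp: orbit_rel_def)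
      have "y \<in> orbit fs x" using step(1) by (simp add: orbit_eq_rtrancl)
      then obtain g where "g \<in> set gs" "g y = f y" using assms(2) f(1) by blast
      then show ?case using orbit_closed[OF _ step.IH] f(2) by metis
    qed simp
  qed
qed

definition involutions_on :: "'b set \<Rightarrow> ('b \<Rightarrow> 'b) list \<Rightarrow> bool" where
  "involutions_on \<Phi> fs \<longleftrightarrow> (\<forall>f\<in>set fs. \<forall>z\<in>\<Phi>. f z \<in> \<Phi> \<and> f (f z) = z)"

lemma orbit_subset: "involutions_on \<Phi> fs \<Longrightarrow> x \<in> \<Phi> \<Longrightarrow> orbit fs x \<subseteq> \<Phi>"
  by (rule orbit_least) (auto simp: involutions_on_def)

lemma orbit_sym:
  assumes "involutions_on \<Phi> fs" "x \<in> \<Phi>" "y \<in> orbit fs x"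
  shows "x \<in> orbit fs y"
proof -
  have "(x, y) \<in> (orbit_rel fs)\<^sup>*" using assms(3) by (simp add: orbit_eq_rtrancl)
  then show ?thesis
  proof (induction rule: rtrancl_induct)
    case (step y z)
    have "y \<in> \<Phi>" using orbit_subset[OF assms(1,2)] step(1) by (auto simp: orbit_eq_rtrancl)
    moreover obtain f where f: "f \<in> set fs" "z = f y" using step(2) by (auto simp: orbit_rel_def)
    ultimately have "f z = y" using assms(1) by (simp add: involutions_on_def)
    then have "y \<in> orbit fs z" using orbit_closed[OF f(1) orbit_refl, of z] by simp
    then show ?case using orbit_trans step.IH by fast
  qed simp
qed

lemma orbit_eq:
  assumes "involutions_on \<Phi> fs" "x \<in> \<Phi>" "y \<in> orbit fs x"
  shows "orbit fs y = orbit fs x"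
  using orbit_trans[OF orbit_sym[OF assms]] orbit_trans[OF assms(3)] by auto

lemma even_card_involution:
  assumes "finite A" "\<And>w. w \<in> A \<Longrightarrow> f w \<in> A \<and> f w \<noteq> w \<and> f (f w) = w"
  shows "even (card A)"
  using assms
proof (induction "card A" arbitrary: A rule: less_induct)
  case less
  show ?case
  proof (cases "A = {}")
    case False
    then obtain w where w: "w \<in> A" by blast
    let ?B = "A - {w, f w}"
    have fw: "f w \<in> A" "f w \<noteq> w" "f (f w) = w" using less.prems(2) w by auto
    then have card_A: "card A = card ?B + 2"
      using less.prems(1) w card_Diff_subset[of "{w, f w}" A]
        card_mono[OF less.prems(1), of "{w, f w}"]
      by simp
    have "even (card ?B)"
    proof (rule less.hyps)
      fix v assume v: "v \<in> ?B"
      then have fv: "f v \<in> A" "f v \<noteq> v" "f (f v) = v" using less.prems(2) by auto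
      have "f v \<noteq> w" using v fv(3) by auto
      moreover have "f v \<noteq> f w" using v fv(3) fw(3) by (metis DiffD2 insertCI)
      ultimately show "f v \<in> ?B \<and> f v \<noteq> v \<and> f (f v) = v" using fv by simp
    qed (use card_A less.prems(1) in auto)
    then show ?thesis using card_A by simp
  qed simp
qed

lemma card_image_le_card_image:
  assumes "finite Q" "\<And>a b. a \<in> Q \<Longrightarrow> b \<in> Q \<Longrightarrow> h a = h b \<Longrightarrow> k a = k b"
  shows "card (k ` Q) \<le> card (h ` Q)"
proof (rule surj_card_le)
  show "k ` Q \<subseteq> (\<lambda>r. k (inv_into Q h r)) ` h ` Q"
  proof
    fix z assume "z \<in> k ` Q"
    then obtain a where a: "a \<in> Q" "z = k a" by blast
    then have "k (inv_into Q h (h a)) = k a"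
      using assms(2) inv_into_into[of "h a" h Q] f_inv_into_f[of "h a" h Q] by blast
    then show "z \<in> (\<lambda>r. k (inv_into Q h r)) ` h ` Q" using a by force
  qed
qed (use assms(1) in simp)

lemma card_diff_remove_common:
  assumes "finite A" "finite B" "U \<subseteq> A" "U \<subseteq> B"
  shows "int (card B) - int (card A) = int (card (B - U)) - int (card (A - U))"
proof -
  have "card U \<le> card A" "card U \<le> card B" using assms card_mono by auto
  then show ?thesis using assms by (simp add: card_Diff_subset finite_subset)
qed

section \<open>Deleting an edge from a gem\<close>

lemma gem_involutions_on:
  assumes "gem \<Phi> a0 a1 a2" "set fs \<subseteq> {a0, a1, a2}"
  shows "involutions_on \<Phi> fs"
  unfolding involutions_on_def
proof (intro ballI)
  fix f z assume "f \<in> set fs" "z \<in> \<Phi>"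
  moreover have "invol_on \<Phi> a0" "invol_on \<Phi> a1" "invol_on \<Phi> a2"
    using assms(1) by (simp_all add: gem_def)
  moreover have "f = a0 \<or> f = a1 \<or> f = a2" using \<open>f \<in> set fs\<close> assms(2) by blast
  ultimately show "f z \<in> \<Phi> \<and> f (f z) = z" unfolding invol_on_def by blast
qed

locale gem_edge_deletion =
  fixes \<Phi> :: "nat set" and a0 a1 a2 :: "nat \<Rightarrow> nat" and x :: nat
  assumes gem: "gem \<Phi> a0 a1 a2" and x_in: "x \<in> \<Phi>"
    and loopless: "\<And>y. y \<in> \<Phi> \<Longrightarrow> a0 y \<notin> orbit [a1, a2] y"
begin

text \<open>Deleting the edge of the dart x removes its four darts D and reroutes a1 around them:
  when a1 y lies in D, the new neighbour b1 y = a1 (a2 (a1 y)) is reached by stepping over the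
  deleted edge around the same vertex.\<close>

definition "D = {x, a0 x, a2 x, a0 (a2 x)}"

definition "b1 y = (if a1 y \<in> D then a1 (a2 (a1 y)) else a1 y)"

definition "\<Psi> = \<Phi> - D"

abbreviation "V \<equiv> orbit [a1, a2]"
abbreviation "V' \<equiv> orbit [b1, a2]"
abbreviation "F \<equiv> orbit [a0, a1]"
abbreviation "F' \<equiv> orbit [a0, b1]"
abbreviation "C \<equiv> orbit [a0, a1, a2]"
abbreviation "C' \<equiv> orbit [a0, b1, a2]"
abbreviation "Ed \<equiv> orbit [a0, a2]"
abbreviation "p1 \<equiv> a1 x"
abbreviation "p2 \<equiv> a1 (a2 x)"
abbreviation "p3 \<equiv> a1 (a0 x)"
abbreviation "p4 \<equiv> a1 (a0 (a2 x))"

lemma orbit_closed_a0: "a0 \<in> set fs \<Longrightarrow> y \<in> orbit fs z \<Longrightarrow> a0 y \<in> orbit fs z"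
  by (rule orbit_closed)

lemma orbit_closed_a1: "a1 \<in> set fs \<Longrightarrow> y \<in> orbit fs z \<Longrightarrow> a1 y \<in> orbit fs z"
  by (rule orbit_closed)

lemma orbit_closed_a2: "a2 \<in> set fs \<Longrightarrow> y \<in> orbit fs z \<Longrightarrow> a2 y \<in> orbit fs z"
  by (rule orbit_closed)

lemma orbit_closed_b1: "b1 \<in> set fs \<Longrightarrow> y \<in> orbit fs z \<Longrightarrow> b1 y \<in> orbit fs z"
  by (rule orbit_closed)

lemma finite_darts: "finite \<Phi>" using gem by (simp add: gem_def)

lemma a0_invol: "y \<in> \<Phi> \<Longrightarrow> a0 y \<in> \<Phi> \<and> a0 y \<noteq> y \<and> a0 (a0 y) = y"
  using gem by (simp add: gem_def invol_on_def)

lemma a1_invol: "y \<in> \<Phi> \<Longrightarrow> a1 y \<in> \<Phi> \<and> a1 y \<noteq> y \<and> a1 (a1 y) = y"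
  using gem by (simp add: gem_def invol_on_def)

lemma a2_invol: "y \<in> \<Phi> \<Longrightarrow> a2 y \<in> \<Phi> \<and> a2 y \<noteq> y \<and> a2 (a2 y) = y"
  using gem by (simp add: gem_def invol_on_def)

lemma a0_a2_comm: "y \<in> \<Phi> \<Longrightarrow> a0 (a2 y) = a2 (a0 y) \<and> a0 y \<noteq> a2 y"
  using gem by (simp add: gem_def)

lemma involutions_on_\<Phi>: "set fs \<subseteq> {a0, a1, a2} \<Longrightarrow> involutions_on \<Phi> fs"
  by (rule gem_involutions_on[OF gem])

lemma D_subset: "D \<subseteq> \<Phi>" using x_in a0_invol a2_invol by (auto simp: D_def)

lemma a0_D: "d \<in> D \<Longrightarrow> a0 d \<in> D"
  using x_in a0_invol a2_invol a0_a2_comm unfolding D_def by auto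

lemma a2_D: "d \<in> D \<Longrightarrow> a2 d \<in> D"
  using x_in a0_invol a2_invol a0_a2_comm unfolding D_def by auto

lemma D_eq: "d \<in> D \<Longrightarrow> D = {d, a0 d, a2 d, a0 (a2 d)}"
  using x_in a0_invol a2_invol a0_a2_comm unfolding D_def by auto

lemma a1_D_eq_a2: assumes "d \<in> D" "a1 d \<in> D" shows "a1 d = a2 d"
proof -
  have dP: "d \<in> \<Phi>" using assms D_subset by auto
  have v1: "a1 d \<in> V d" by (rule orbit_closed) auto
  have v2: "a2 d \<in> V d" by (rule orbit_closed) auto
  have "a1 d \<in> {d, a0 d, a2 d, a0 (a2 d)}" using assms D_eq by blast
  moreover have "a1 d \<noteq> d" using a1_invol dP by blast
  moreover have "a1 d \<noteq> a0 d" using loopless[OF dP] v1 by auto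
  moreover have "a1 d \<noteq> a0 (a2 d)"
  proof
    assume "a1 d = a0 (a2 d)"
    then have "a0 (a2 d) \<in> V (a2 d)" using v1 orbit_eq[OF involutions_on_\<Phi> dP v2] by simp
    then show False using loopless a2_invol dP by blast
  qed
  ultimately show ?thesis by blast
qed

lemma \<Psi>_subset: "\<Psi> \<subseteq> \<Phi>" by (auto simp: \<Psi>_def)

lemma b1_eq_a1: "a1 y \<notin> D \<Longrightarrow> b1 y = a1 y" by (simp add: b1_def)

lemma b1_invol: assumes "y \<in> \<Psi>" shows "b1 y \<in> \<Psi> \<and> b1 y \<noteq> y \<and> b1 (b1 y) = y"
proof (cases "a1 y \<in> D")
  case False
  have yP: "y \<in> \<Phi>" "y \<notin> D" using assms by (auto simp: \<Psi>_def)
  have "a1 (a1 y) = y" using a1_invol yP by blast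
  then show ?thesis using False yP a1_invol by (auto simp: b1_def \<Psi>_def)
next
  case True
  let ?d = "a1 y"
  have yP: "y \<in> \<Phi>" "y \<notin> D" using assms by (auto simp: \<Psi>_def)
  have dP: "?d \<in> \<Phi>" using D_subset True by auto
  have d2: "a2 ?d \<in> D" using a2_D True by blast
  have d2P: "a2 ?d \<in> \<Phi>" using d2 D_subset by auto
  have nd: "a1 (a2 ?d) \<notin> D"
  proof
    assume "a1 (a2 ?d) \<in> D"
    then have "a1 (a2 ?d) = a2 (a2 ?d)" using a1_D_eq_a2 d2 by blast
    then have "a1 (a2 ?d) = ?d" using a2_invol dP by simp
    then have "a2 ?d = a1 ?d" using a1_invol d2P by metis
    then have "a2 ?d = y" using a1_invol yP by simp
    then show False using d2 yP by simp
  qed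
  have b: "b1 y = a1 (a2 ?d)" using True by (simp add: b1_def)
  have bb: "b1 (a1 (a2 ?d)) = y"
  proof -
    have "a1 (a1 (a2 ?d)) = a2 ?d" using a1_invol d2P by blast
    then show ?thesis using d2 a2_invol dP a1_invol yP by (simp add: b1_def)
  qed
  have ne: "a1 (a2 ?d) \<noteq> y"
  proof
    assume "a1 (a2 ?d) = y"
    then have "a2 ?d = a1 y" using a1_invol d2P by metis
    then show False using a2_invol dP by simp
  qed
  show ?thesis using b bb ne nd a1_invol d2P by (simp add: \<Psi>_def)
qed

lemma a0_\<Psi>: "y \<in> \<Psi> \<Longrightarrow> a0 y \<in> \<Psi>"
  using a0_invol a0_D unfolding \<Psi>_def by (metis DiffE DiffI)

lemma a2_\<Psi>: "y \<in> \<Psi> \<Longrightarrow> a2 y \<in> \<Psi>"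
  using a2_invol a2_D unfolding \<Psi>_def by (metis DiffE DiffI)

lemma gem_\<Psi>: "gem \<Psi> a0 b1 a2"
  unfolding gem_def invol_on_def
  using finite_darts \<Psi>_subset b1_invol a0_\<Psi> a2_\<Psi> a0_invol a2_invol a0_a2_comm
  by (auto intro: finite_subset)

lemma involutions_on_\<Psi>: "set gs \<subseteq> {a0, b1, a2} \<Longrightarrow> involutions_on \<Psi> gs"
  unfolding involutions_on_def using b1_invol a0_\<Psi> a2_\<Psi> a0_invol a2_invol \<Psi>_subset by blast

lemma old_orbit_eq: "set fs \<subseteq> {a0, a1, a2} \<Longrightarrow> y \<in> \<Phi> \<Longrightarrow> z \<in> orbit fs y \<Longrightarrow> orbit fs z = orbit fs y"
  by (rule orbit_eq[OF involutions_on_\<Phi>])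

lemma new_orbit_eq: "set gs \<subseteq> {a0, b1, a2} \<Longrightarrow> y \<in> \<Psi> \<Longrightarrow> z \<in> orbit gs y \<Longrightarrow> orbit gs z = orbit gs y"
  by (rule orbit_eq[OF involutions_on_\<Psi>])

lemma old_orbit_subset: "set fs \<subseteq> {a0, a1, a2} \<Longrightarrow> y \<in> \<Phi> \<Longrightarrow> orbit fs y \<subseteq> \<Phi>"
  by (rule orbit_subset[OF involutions_on_\<Phi>])

lemma new_orbit_subset: "set gs \<subseteq> {a0, b1, a2} \<Longrightarrow> y \<in> \<Psi> \<Longrightarrow> orbit gs y \<subseteq> \<Psi>"
  by (rule orbit_subset[OF involutions_on_\<Psi>])

lemma finite_\<Psi>: "finite \<Psi>"
  using finite_darts \<Psi>_subset finite_subset by blast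

lemma x0_in: "a0 x \<in> \<Phi>" and x2_in: "a2 x \<in> \<Phi>" and x02_in: "a0 (a2 x) \<in> \<Phi>"
  using a0_invol[OF x_in] a2_invol[OF x_in] a0_invol[OF a2_invol[OF x_in, THEN conjunct1]] by auto

lemma D_darts: "x \<in> D" "a0 x \<in> D" "a2 x \<in> D" "a0 (a2 x) \<in> D" by (auto simp: D_def)

lemma b1_p1: "b1 p1 = p2"
proof -
  have "a1 p1 = x" using a1_invol[OF x_in] by blast
  then show ?thesis using D_darts by (simp add: b1_def)
qed

lemma b1_p3: "b1 p3 = p4"
proof -
  have "a1 p3 = a0 x" using a1_invol[OF x0_in] by blast
  moreover have "a2 (a0 x) = a0 (a2 x)" using a0_a2_comm[OF x_in] by simp
  ultimately show ?thesis using D_darts by (simp add: b1_def)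
qed

lemma p1_D_iff_p2_D: "p1 \<in> D \<longleftrightarrow> p2 \<in> D"
proof
  assume "p1 \<in> D"
  then have "p1 = a2 x" using a1_D_eq_a2 D_darts by blast
  then have "p2 = x" using a1_invol[OF x_in] by simp
  then show "p2 \<in> D" using D_darts by simp
next
  assume "p2 \<in> D"
  then have "p2 = a2 (a2 x)" using a1_D_eq_a2 D_darts by blast
  then have "p2 = x" using a2_invol[OF x_in] by simp
  then have "a2 x = p1" using a1_invol[OF x2_in] by metis
  then show "p1 \<in> D" using D_darts by simp
qed

lemma p3_D_iff_p4_D: "p3 \<in> D \<longleftrightarrow> p4 \<in> D"
proof
  assume "p3 \<in> D"
  then have "p3 = a2 (a0 x)" using a1_D_eq_a2 D_darts by blast
  then have "p3 = a0 (a2 x)" using a0_a2_comm[OF x_in] by simp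
  then have "p4 = a0 x" using a1_invol[OF x0_in] by simp
  then show "p4 \<in> D" using D_darts by simp
next
  assume "p4 \<in> D"
  then have "p4 = a2 (a0 (a2 x))" using a1_D_eq_a2 D_darts by blast
  moreover have "a0 (a2 x) = a2 (a0 x)" using a0_a2_comm[OF x_in] by simp
  moreover have "a2 (a2 (a0 x)) = a0 x" using a2_invol[OF x0_in] by blast
  ultimately have "p4 = a0 x" by simp
  then have "a0 (a2 x) = p3" using a1_invol[OF x02_in] by metis
  then show "p3 \<in> D" using D_darts by simp
qed

definition "rerouted = {q \<in> \<Psi>. a1 q \<in> D}"

lemma rerouted_subset: "rerouted \<subseteq> {p1, p2, p3, p4}"
proof
  fix q assume q: "q \<in> rerouted"
  then have "q \<in> \<Phi>" "a1 q \<in> D" by (auto simp: rerouted_def \<Psi>_def)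
  then have "a1 (a1 q) = q" using a1_invol by blast
  then have "q \<in> a1 ` D" using \<open>a1 q \<in> D\<close> by (metis image_eqI)
  moreover have "a1 ` D = {p1, p2, p3, p4}" by (auto simp: D_def)
  ultimately show "q \<in> {p1, p2, p3, p4}" by simp
qed

lemma rerouted_if_notin_D: assumes "q \<in> {p1, p2, p3, p4}" "q \<notin> D" shows "q \<in> rerouted"
proof -
  have "q \<in> a1 ` D" using assms(1) by (auto simp: D_def)
  then obtain d where d: "d \<in> D" "q = a1 d" by blast
  then have "d \<in> \<Phi>" using D_subset by blast
  then have "q \<in> \<Phi>" "a1 q = d" using a1_invol d(2) by auto
  then show ?thesis using assms(2) d(1) by (simp add: rerouted_def \<Psi>_def)
qed

definition "Q = {p1, p3} - D"

lemma Q_rerouted: "Q \<subseteq> rerouted" using rerouted_if_notin_D by (auto simp: Q_def)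

lemma Q_subset: "Q \<subseteq> \<Psi>" using Q_rerouted by (auto simp: rerouted_def)

lemma finite_Q: "finite Q" by (simp add: Q_def)

definition a1_replaced :: "(nat \<Rightarrow> nat) list \<Rightarrow> (nat \<Rightarrow> nat) list \<Rightarrow> bool" where
  "a1_replaced fs gs \<longleftrightarrow> a1 \<in> set fs \<and> set fs \<subseteq> {a0, a1, a2} \<and> b1 \<in> set gs \<and> set gs \<subseteq> {a0, b1, a2}
     \<and> set fs - {a1} \<subseteq> set gs \<and> set gs - {b1} \<subseteq> set fs"

lemma a1_replaced_V: "a1_replaced [a1, a2] [b1, a2]" by (auto simp: a1_replaced_def)

lemma a1_replaced_F: "a1_replaced [a0, a1] [a0, b1]" by (auto simp: a1_replaced_def)

lemma a1_replaced_C: "a1_replaced [a0, a1, a2] [a0, b1, a2]" by (auto simp: a1_replaced_def)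

lemma orbit_untouched:
  assumes ok: "a1_replaced fs gs" and yP: "y \<in> \<Phi>" and dis: "orbit fs y \<inter> D = {}"
  shows "orbit gs y = orbit fs y"
proof (rule orbit_cong)
  fix w f' assume w: "w \<in> orbit fs y" and f': "f' \<in> set gs"
  show "\<exists>f\<in>set fs. f' w = f w"
  proof (cases "f' = b1")
    case True
    have "a1 w \<in> orbit fs y" using orbit_closed ok w by (auto simp: a1_replaced_def)
    then have "b1 w = a1 w" using dis b1_eq_a1 by blast
    then show ?thesis using True ok by (auto simp: a1_replaced_def)
  next
    case False then show ?thesis using f' ok by (auto simp: a1_replaced_def)
  qed
next
  fix w f assume w: "w \<in> orbit fs y" and f: "f \<in> set fs"
  show "\<exists>f'\<in>set gs. f' w = f w"
  proof (cases "f = a1")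
    case True
    have "a1 w \<in> orbit fs y" using orbit_closed ok w by (auto simp: a1_replaced_def)
    then have "b1 w = a1 w" using dis b1_eq_a1 by blast
    then show ?thesis using True ok by (auto simp: a1_replaced_def)
  next
    case False then show ?thesis using f ok by (auto simp: a1_replaced_def)
  qed
qed

lemma new_orbit_step:
  assumes ok: "a1_replaced fs gs" and w: "w \<in> \<Psi>" and f: "f \<in> set fs" and nd: "f w \<notin> D"
  shows "f w \<in> orbit gs w"
proof (cases "f = a1")
  case True
  then have "b1 w = f w" using nd b1_eq_a1 by simp
  then show ?thesis using orbit_closed[of b1 gs w w] ok by (auto simp: a1_replaced_def)
next
  case False
  then have "f \<in> set gs" using ok f by (auto simp: a1_replaced_def)
  then show ?thesis using orbit_closed[of f gs w w] by simp
qed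

lemma leaving_D_rerouted:
  assumes ok: "a1_replaced fs gs" and "w \<in> D" "f \<in> set fs" "f w \<notin> D"
  shows "f w \<in> rerouted"
proof -
  have "f \<in> {a0, a1, a2}" using ok assms(3) by (auto simp: a1_replaced_def)
  then have "f = a1" using a0_D a2_D assms(2,4) by auto
  moreover have "w \<in> \<Phi>" using assms(2) D_subset by blast
  ultimately show ?thesis using assms(2,4) a1_invol by (auto simp: rerouted_def \<Psi>_def)
qed

lemma old_path_new_orbit:
  assumes ok: "a1_replaced fs gs" and path: "(y0, z) \<in> (orbit_rel fs)\<^sup>*" and y0: "y0 \<in> \<Phi>"
    and "z \<notin> D"
  shows "(y0 \<notin> D \<and> z \<in> orbit gs y0) \<or> (\<exists>q\<in>rerouted. q \<in> orbit fs y0 \<and> z \<in> orbit gs q)"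
  using path \<open>z \<notin> D\<close>
proof (induction rule: rtrancl_induct)
  case (step w z)
  from step(2) obtain f where f: "f \<in> set fs" "z = f w" by (auto simp: orbit_rel_def)
  have z_orbit: "z \<in> orbit fs y0" using step(1,2) by (simp add: orbit_eq_rtrancl)
  show ?case
  proof (cases "w \<in> D")
    case True
    then have "z \<in> rerouted" using leaving_D_rerouted[OF ok _ f(1)] f(2) step.prems by simp
    then show ?thesis using z_orbit orbit_refl[of z gs] by blast
  next
    case False
    have "w \<in> orbit fs y0" using step(1) by (simp add: orbit_eq_rtrancl)
    moreover have "set fs \<subseteq> {a0, a1, a2}" using ok by (simp add: a1_replaced_def)
    ultimately have "w \<in> \<Phi>" using old_orbit_subset[OF _ y0] by blast
    with False have "z \<in> orbit gs w"
      using new_orbit_step[OF ok _ f(1)] f(2) step.prems by (simp add: \<Psi>_def)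
    note step_new = orbit_trans[OF _ this]
    from step.IH[OF False] show ?thesis
    proof
      assume "y0 \<notin> D \<and> w \<in> orbit gs y0"
      then show ?thesis using step_new by blast
    next
      assume "\<exists>q\<in>rerouted. q \<in> orbit fs y0 \<and> w \<in> orbit gs q"
      then show ?thesis using step_new by blast
    qed
  qed
qed simp

lemma edge_orbit_x: "Ed x = D"
proof
  show "Ed x \<subseteq> D"
  proof (rule orbit_least)
    show "x \<in> D" by (rule D_darts)
    fix f w assume "f \<in> set [a0, a2]" "w \<in> D"
    then show "f w \<in> D" using a0_D a2_D by auto
  qed
  have "a0 x \<in> Ed x" "a2 x \<in> Ed x" by (auto intro: orbit_closed_a0 orbit_closed_a2)
  moreover then have "a0 (a2 x) \<in> Ed x" by (auto intro: orbit_closed_a0)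
  ultimately show "D \<subseteq> Ed x" by (auto simp: D_def)
qed

lemma V_a2: "V (a2 x) = V x"
  by (rule old_orbit_eq[OF _ x_in]) (simp_all add: orbit_closed_a2[OF _ orbit_refl])

lemma V_a02: "V (a0 (a2 x)) = V (a0 x)"
proof -
  have "a2 (a0 x) \<in> V (a0 x)" by (simp add: orbit_closed_a2[OF _ orbit_refl])
  then have "a0 (a2 x) \<in> V (a0 x)" using a0_a2_comm[OF x_in] by simp
  then show ?thesis using old_orbit_eq[of "[a1, a2]" "a0 x" "a0 (a2 x)"] x0_in by simp
qed

lemma F_a0: "F (a0 x) = F x"
  by (rule old_orbit_eq[OF _ x_in]) (simp_all add: orbit_closed_a0[OF _ orbit_refl])

lemma F_a02: "F (a0 (a2 x)) = F (a2 x)"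
  by (rule old_orbit_eq[OF _ x2_in]) (simp_all add: orbit_closed_a0[OF _ orbit_refl])

lemma component_D: "d \<in> D \<Longrightarrow> C d = C x"
proof -
  assume "d \<in> D"
  then have "d \<in> Ed x" using edge_orbit_x by simp
  moreover have "Ed x \<subseteq> C x" by (rule orbit_mono) auto
  ultimately have "d \<in> C x" by blast
  then show ?thesis using old_orbit_eq[where fs="[a0, a1, a2]" and y=x and z=d, OF _ x_in] by simp
qed

lemma a0_notin_V: "a0 x \<notin> V x" using loopless[OF x_in] .

lemma p_in_V: "p1 \<in> V x" "p2 \<in> V x" "p3 \<in> V (a0 x)" "p4 \<in> V (a0 x)"
proof -
  show "p1 \<in> V x" by (simp add: orbit_closed_a1[OF _ orbit_refl])
  have "a2 x \<in> V x" by (simp add: orbit_closed_a2[OF _ orbit_refl])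
  then show "p2 \<in> V x" by (rule orbit_closed_a1[rotated]) simp
  show "p3 \<in> V (a0 x)" by (simp add: orbit_closed_a1[OF _ orbit_refl])
  have "a2 (a0 x) \<in> V (a0 x)" by (simp add: orbit_closed_a2[OF _ orbit_refl])
  then have "a1 (a2 (a0 x)) \<in> V (a0 x)" by (rule orbit_closed_a1[rotated]) simp
  then show "p4 \<in> V (a0 x)" using a0_a2_comm[OF x_in] by simp
qed

lemma ends_distinct: "V x \<noteq> V (a0 x)"
proof
  assume "V x = V (a0 x)"
  then have "a0 x \<in> V x" using orbit_refl[of "a0 x" "[a1, a2]"] by simp
  then show False using a0_notin_V by simp
qed

lemma new_vertex_subset: assumes "y \<in> \<Psi>" shows "V' y \<subseteq> V y"
proof (rule orbit_least)
  show "y \<in> V y" by simp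
  fix f w assume f: "f \<in> set [b1, a2]" and w: "w \<in> V y"
  have 1: "a1 w \<in> V y" using w by (rule orbit_closed_a1[rotated]) simp
  have 2: "a2 (a1 w) \<in> V y" using 1 by (rule orbit_closed_a2[rotated]) simp
  have 3: "a1 (a2 (a1 w)) \<in> V y" using 2 by (rule orbit_closed_a1[rotated]) simp
  have "b1 w \<in> V y" using 1 3 by (simp add: b1_def)
  moreover have "a2 w \<in> V y" using w by (rule orbit_closed_a2[rotated]) simp
  ultimately show "f w \<in> V y" using f by auto
qed

lemma rerouted_new_orbit:
  assumes q: "q \<in> rerouted" and gs: "b1 \<in> set gs" "set gs \<subseteq> {a0, b1, a2}"
  shows "(V q = V x \<and> p1 \<in> Q \<and> orbit gs q = orbit gs p1) \<or>
         (V q = V (a0 x) \<and> p3 \<in> Q \<and> orbit gs q = orbit gs p3)"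
proof -
  have qD: "q \<notin> D" using q by (simp add: rerouted_def \<Psi>_def)
  have "q \<in> {p1, p2, p3, p4}" using q rerouted_subset by blast
  then consider "q = p1" | "q = p2" | "q = p3" | "q = p4" by blast
  then show ?thesis
  proof cases
    case 1
    then show ?thesis using qD old_orbit_eq[OF _ x_in p_in_V(1)] by (simp add: Q_def)
  next
    case 2
    then have "p1 \<in> Q" using p1_D_iff_p2_D qD by (simp add: Q_def)
    moreover have "p2 \<in> orbit gs p1" using b1_p1 orbit_closed_b1[OF gs(1) orbit_refl, of p1] by simp
    ultimately have "orbit gs p2 = orbit gs p1" using new_orbit_eq[OF gs(2)] Q_subset by blast
    then show ?thesis using 2 \<open>p1 \<in> Q\<close> old_orbit_eq[OF _ x_in p_in_V(2)] by simp
  next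
    case 3
    then show ?thesis using qD old_orbit_eq[OF _ x0_in p_in_V(3)] by (simp add: Q_def)
  next
    case 4
    then have "p3 \<in> Q" using p3_D_iff_p4_D qD by (simp add: Q_def)
    moreover have "p4 \<in> orbit gs p3" using b1_p3 orbit_closed_b1[OF gs(1) orbit_refl, of p3] by simp
    ultimately have "orbit gs p4 = orbit gs p3" using new_orbit_eq[OF gs(2)] Q_subset by blast
    then show ?thesis using 4 \<open>p3 \<in> Q\<close> old_orbit_eq[OF _ x0_in p_in_V(4)] by simp
  qed
qed

lemma mem_new_vertex_if_mem_vertex:
  assumes y: "y \<in> \<Psi>" and z: "z \<in> \<Psi>" and zy: "z \<in> V y"
  shows "z \<in> V' y"
proof (rule ccontr)
  assume z_new: "z \<notin> V' y"
  have yP: "y \<in> \<Phi>" "y \<notin> D" and zP: "z \<in> \<Phi>" "z \<notin> D" using y z by (auto simp: \<Psi>_def)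
  have y_new: "y \<notin> V' z" using z_new orbit_sym[OF involutions_on_\<Psi>[of "[b1, a2]"] z] by auto
  have "y \<in> V z" using orbit_sym[OF involutions_on_\<Phi>[of "[a1, a2]"] yP(1) zy] by simp
  then have paths: "(y, z) \<in> (orbit_rel [a1, a2])\<^sup>*" "(z, y) \<in> (orbit_rel [a1, a2])\<^sup>*"
    using zy by (simp_all add: orbit_eq_rtrancl)
  obtain q where q: "q \<in> rerouted" "q \<in> V y" "z \<in> V' q"
    using old_path_new_orbit[OF a1_replaced_V paths(1) yP(1) zP(2)] z_new by blast
  obtain q' where q': "q' \<in> rerouted" "q' \<in> V z" "y \<in> V' q'"
    using old_path_new_orbit[OF a1_replaced_V paths(2) zP(1) yP(2)] y_new by blast
  have "V q = V y" "V q' = V y"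
    using old_orbit_eq[of "[a1, a2]" y q] old_orbit_eq[of "[a1, a2]" z q']
      old_orbit_eq[of "[a1, a2]" y z] yP(1) zP(1) zy q(2) q'(2) by simp_all
  then have "V' q = V' q'"
    using rerouted_new_orbit[OF q(1), of "[b1, a2]"] rerouted_new_orbit[OF q'(1), of "[b1, a2]"]
      ends_distinct by auto
  then have "V' y = V' q"
    using q(1) q'(3) new_orbit_eq[of "[b1, a2]" q y] by (simp add: rerouted_def)
  then show False using q(3) z_new by simp
qed

definition "untouched fs = {r \<in> orbits \<Phi> fs. r \<inter> D = {}}"

abbreviation "touched fs \<equiv> orbits \<Phi> fs - untouched fs"
abbreviation "created fs gs \<equiv> orbits \<Psi> gs - untouched fs"

lemma untouched_subset_orbits_\<Psi>:
  assumes ok: "a1_replaced fs gs"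
  shows "untouched fs \<subseteq> orbits \<Psi> gs"
proof
  fix r assume "r \<in> untouched fs"
  then obtain y where y: "y \<in> \<Phi>" "r = orbit fs y" "r \<inter> D = {}"
    by (auto simp: untouched_def orbits_def)
  then have "y \<notin> D" using orbit_refl[of y fs] by blast
  then have "y \<in> \<Psi>" using y by (simp add: \<Psi>_def)
  moreover have "orbit gs y = r" using orbit_untouched[OF ok y(1)] y by simp
  ultimately show "r \<in> orbits \<Psi> gs" by (auto simp: orbits_def)
qed

lemma rerouted_orbit_touched:
  assumes ok: "a1_replaced fs gs" and q: "q \<in> rerouted"
  shows "orbit gs q \<notin> untouched fs"
proof
  assume "orbit gs q \<in> untouched fs"
  then obtain y where y: "y \<in> \<Phi>" "orbit gs q = orbit fs y" "orbit fs y \<inter> D = {}"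
    by (auto simp: untouched_def orbits_def)
  have qP: "q \<in> \<Phi>" "a1 q \<in> D" using q by (auto simp: rerouted_def \<Psi>_def)
  have "q \<in> orbit fs y" using y(2) orbit_refl[of q gs] by simp
  moreover have "set fs \<subseteq> {a0, a1, a2}" "a1 \<in> set fs" using ok by (auto simp: a1_replaced_def)
  ultimately have "orbit fs q = orbit fs y" using old_orbit_eq y(1) by blast
  moreover have "a1 q \<in> orbit fs q" using orbit_closed_a1[OF \<open>a1 \<in> set fs\<close> orbit_refl] .
  ultimately show False using qP(2) y(3) by auto
qed

lemma finite_orbits: "finite (orbits \<Phi> fs)" "finite (orbits \<Psi> gs)"
  using finite_darts \<Psi>_subset by (auto simp: orbits_def intro: finite_subset)

lemma card_orbits_change: assumes ok: "a1_replaced fs gs"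
  shows "int (card (orbits \<Psi> gs)) - int (card (orbits \<Phi> fs))
       = int (card (created fs gs)) - int (card (touched fs))"
  by (rule card_diff_remove_common[OF finite_orbits _ untouched_subset_orbits_\<Psi>[OF ok]])
    (auto simp: untouched_def)

lemma edge_orbit_D: "d \<in> D \<Longrightarrow> Ed d = D"
  using old_orbit_eq[of "[a0, a2]" x d] x_in edge_orbit_x by simp

lemma edge_orbits_\<Psi>: "orbits \<Psi> [a0, a2] = orbits \<Phi> [a0, a2] - {D}"
proof
  show "orbits \<Psi> [a0, a2] \<subseteq> orbits \<Phi> [a0, a2] - {D}"
    using \<Psi>_subset orbit_refl[of _ "[a0, a2]"] by (auto simp: orbits_def \<Psi>_def)
  show "orbits \<Phi> [a0, a2] - {D} \<subseteq> orbits \<Psi> [a0, a2]"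
    using edge_orbit_D by (auto simp: orbits_def \<Psi>_def)
qed

lemma card_edge_orbits_\<Psi>: "card (orbits \<Psi> [a0, a2]) = card (orbits \<Phi> [a0, a2]) - 1"
proof -
  have "D \<in> orbits \<Phi> [a0, a2]" using x_in edge_orbit_x by (auto simp: orbits_def)
  then show ?thesis using finite_orbits(1) by (simp add: edge_orbits_\<Psi>)
qed

lemma component_x_touched: "C x \<in> touched [a0, a1, a2]"
proof -
  have "x \<in> C x \<inter> D" using D_darts by simp
  then show ?thesis using x_in unfolding untouched_def orbits_def by blast
qed

lemma touched_orbit_D:
  assumes "r \<in> touched fs" "set fs \<subseteq> {a0, a1, a2}"
  shows "\<exists>d\<in>D. r = orbit fs d"
proof -
  from assms obtain y where y: "y \<in> \<Phi>" "r = orbit fs y" "r \<inter> D \<noteq> {}"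
    by (auto simp: untouched_def orbits_def)
  then obtain d where "d \<in> r" "d \<in> D" by blast
  then show ?thesis using old_orbit_eq[OF assms(2) y(1)] y(2) by metis
qed

lemma touched_vertices: "touched [a1, a2] \<subseteq> {V x, V (a0 x)}"
proof
  fix r assume "r \<in> touched [a1, a2]"
  then obtain d where d: "d \<in> D" "r = V d" using touched_orbit_D by fastforce
  then show "r \<in> {V x, V (a0 x)}" using V_a2 V_a02 by (auto simp: D_def)
qed

lemma touched_faces: "touched [a0, a1] \<subseteq> {F x, F (a2 x)}"
proof
  fix r assume "r \<in> touched [a0, a1]"
  then obtain d where d: "d \<in> D" "r = F d" using touched_orbit_D by fastforce
  then show "r \<in> {F x, F (a2 x)}" using F_a0 F_a02 by (auto simp: D_def)
qed

lemma new_vertices: "V' ` Q \<subseteq> created [a1, a2] [b1, a2]"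
  using Q_subset rerouted_orbit_touched[OF a1_replaced_V] Q_rerouted by (auto simp: orbits_def)

lemma new_faces: "F' ` Q \<subseteq> created [a0, a1] [a0, b1]"
  using Q_subset rerouted_orbit_touched[OF a1_replaced_F] Q_rerouted by (auto simp: orbits_def)

lemma inj_on_new_vertex: "inj_on V' Q"
proof (rule inj_onI)
  fix a b assume a: "a \<in> Q" and b: "b \<in> Q" and e: "V' a = V' b"
  show "a = b"
  proof (rule ccontr)
    assume "a \<noteq> b"
    then have ab: "{a, b} = {p1, p3}" using a b by (auto simp: Q_def)
    have p1Q: "p1 \<in> \<Psi>" "p3 \<in> \<Psi>" using ab a b Q_subset by auto
    have "V' p1 = V' p3" using ab e by (auto simp: doubleton_eq_iff)
    then have "p3 \<in> V' p1" using orbit_refl[of p3 "[b1, a2]"] by simp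
    then have "p3 \<in> V p1" using new_vertex_subset[OF p1Q(1)] by blast
    moreover have "V p1 = V x" using old_orbit_eq[OF _ x_in p_in_V(1)] by simp
    moreover have "V p3 = V (a0 x)" using old_orbit_eq[OF _ x0_in p_in_V(3)] by simp
    ultimately have "p3 \<in> V x" "V p3 = V (a0 x)" by simp_all
    moreover have "V p3 = V x" using old_orbit_eq[of "[a1, a2]" x p3] x_in \<open>p3 \<in> V x\<close> by simp
    ultimately have "V x = V (a0 x)" by simp
    then show False using ends_distinct by simp
  qed
qed

lemma new_components: "created [a0, a1, a2] [a0, b1, a2] \<subseteq> C' ` Q"
proof
  fix r assume r: "r \<in> created [a0, a1, a2] [a0, b1, a2]"
  then obtain y where y: "y \<in> \<Psi>" "r = C' y" by (auto simp: orbits_def)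
  have yP: "y \<in> \<Phi>" "y \<notin> D" using y by (auto simp: \<Psi>_def)
  have "C y \<inter> D \<noteq> {}"
  proof
    assume "C y \<inter> D = {}"
    then have "C' y = C y" "C y \<in> untouched [a0, a1, a2]"
      using orbit_untouched[OF a1_replaced_C yP(1)] yP by (auto simp: untouched_def orbits_def)
    then show False using r y by simp
  qed
  then obtain d where "d \<in> C y" "d \<in> D" by blast
  then have "C y = C x" using old_orbit_eq[of "[a0, a1, a2]" y d] yP(1) component_D by simp
  then have "(x, y) \<in> (orbit_rel [a0, a1, a2])\<^sup>*"
    using orbit_refl[of y "[a0, a1, a2]"] by (simp add: orbit_eq_rtrancl)
  then obtain q where q: "q \<in> rerouted" "y \<in> C' q"
    using old_path_new_orbit[OF a1_replaced_C _ x_in yP(2)] D_darts(1) by blast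
  then have "r = C' q" using y new_orbit_eq[of "[a0, b1, a2]" q y] by (simp add: rerouted_def)
  then show "r \<in> C' ` Q" using rerouted_new_orbit[OF q(1), of "[a0, b1, a2]"] by auto
qed

lemma card_new_components_le_faces: "card (C' ` Q) \<le> card (F' ` Q)"
proof (rule card_image_le_card_image[OF finite_Q])
  fix a b assume a: "a \<in> Q" and b: "b \<in> Q" and e: "F' a = F' b"
  have aP: "a \<in> \<Psi>" "b \<in> \<Psi>" using a b Q_subset by auto
  have "b \<in> F' a" using e orbit_refl[of b "[a0, b1]"] by simp
  then have "b \<in> C' a" using orbit_mono[of "[a0, b1]" "[a0, b1, a2]"] by auto
  then have "C' b = C' a" using new_orbit_eq[where gs="[a0, b1, a2]" and y=a and z=b] aP(1) by simp
  then show "C' a = C' b" by simp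
qed

lemma faces_distinct_avoid:
  assumes "F x \<noteq> F (a2 x)"
  shows "a2 x \<notin> F x" "a0 (a2 x) \<notin> F x"
proof -
  show nx2: "a2 x \<notin> F x"
  proof
    assume "a2 x \<in> F x"
    then have "F (a2 x) = F x" using old_orbit_eq[of "[a0, a1]" x "a2 x"] x_in by simp
    then show False using assms by simp
  qed
  show "a0 (a2 x) \<notin> F x"
  proof
    assume "a0 (a2 x) \<in> F x"
    then have "a0 (a0 (a2 x)) \<in> F x" by (rule orbit_closed_a0[rotated]) simp
    then show False using nx2 a0_invol[OF x2_in] by simp
  qed
qed

lemma p_in_F: "p1 \<in> F x" "p3 \<in> F x"
proof -
  show "p1 \<in> F x" by (simp add: orbit_closed_a1[OF _ orbit_refl])
  have "a0 x \<in> F x" by (simp add: orbit_closed_a0[OF _ orbit_refl])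
  then show "p3 \<in> F x" by (rule orbit_closed_a1[rotated]) simp
qed

lemma faces_distinct_p_notin_D:
  assumes "F x \<noteq> F (a2 x)"
  shows "p1 \<notin> D" "p3 \<notin> D"
proof -
  show "p1 \<notin> D"
  proof
    assume "p1 \<in> D"
    then have "p1 = a2 x" using a1_D_eq_a2 D_darts(1) by blast
    then show False using p_in_F faces_distinct_avoid[OF assms] by simp
  qed
  show "p3 \<notin> D"
  proof
    assume "p3 \<in> D"
    then have "p3 = a2 (a0 x)" using a1_D_eq_a2 D_darts(2) by blast
    then have "p3 = a0 (a2 x)" using a0_a2_comm[OF x_in] by simp
    then show False using p_in_F faces_distinct_avoid[OF assms] by simp
  qed
qed

lemma a1_pairs_face_component:
  assumes ne: "F x \<noteq> F (a2 x)" and np3: "p3 \<notin> C' p1" and w: "w \<in> C' p1 \<inter> F x - {p1}"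
  shows "a1 w \<in> C' p1 \<inter> F x - {p1} \<and> a1 w \<noteq> w \<and> a1 (a1 w) = w"
proof -
  have p1P: "p1 \<in> \<Psi>"
    using rerouted_if_notin_D[of p1] faces_distinct_p_notin_D[OF ne] by (auto simp: rerouted_def)
  have wS: "w \<in> C' p1" and wF: "w \<in> F x" and wn: "w \<noteq> p1" using w by auto
  then have wP: "w \<in> \<Phi>" "w \<notin> D"
    using new_orbit_subset[of "[a0, b1, a2]" p1] p1P \<Psi>_subset by (auto simp: \<Psi>_def)
  have a1F: "a1 w \<in> F x" using wF by (rule orbit_closed_a1[rotated]) simp
  have a1nD: "a1 w \<notin> D"
  proof
    assume "a1 w \<in> D"
    moreover have "a1 w \<noteq> a2 x" "a1 w \<noteq> a0 (a2 x)" using a1F faces_distinct_avoid[OF ne] by auto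
    ultimately have "a1 w = x \<or> a1 w = a0 x" by (auto simp: D_def)
    then have "w = p1 \<or> w = p3" using a1_invol[OF wP(1)] by auto
    then show False using wn np3 wS by auto
  qed
  have "a1 w \<in> C' p1" using wS orbit_closed_b1[of "[a0, b1, a2]" w p1] b1_eq_a1[OF a1nD] by simp
  moreover have "a1 w \<noteq> p1"
  proof
    assume "a1 w = p1"
    then have "w = x" using a1_invol[OF wP(1)] a1_invol[OF x_in] by metis
    then show False using wP(2) D_darts by simp
  qed
  ultimately show ?thesis using a1F a1_invol[OF wP(1)] by blast
qed

text \<open>A handshake argument: the darts of C' p1 inside the face F x are paired by a0; if p3
  were not among them, the same darts except p1 would be paired by a1, so their number would be
  both even and odd.\<close>

lemma faces_distinct_same_component:
  assumes ne: "F x \<noteq> F (a2 x)"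
  shows "C' p3 = C' p1"
proof -
  have p1P: "p1 \<in> \<Psi>"
    using rerouted_if_notin_D[of p1] faces_distinct_p_notin_D[OF ne] by (auto simp: rerouted_def)
  have "p3 \<in> C' p1"
  proof (rule ccontr)
    assume np3: "p3 \<notin> C' p1"
    define A where "A = C' p1 \<inter> F x"
    have SP: "C' p1 \<subseteq> \<Psi>" using new_orbit_subset[of "[a0, b1, a2]" p1] p1P by simp
    have finA: "finite A" using SP finite_\<Psi> unfolding A_def by (meson finite_Int finite_subset)
    have "even (card A)"
    proof (rule even_card_involution[OF finA])
      fix w assume w: "w \<in> A"
      then have wP: "w \<in> \<Phi>" using SP \<Psi>_subset unfolding A_def by blast
      have "a0 w \<in> C' p1" "a0 w \<in> F x" using w unfolding A_def by (auto intro: orbit_closed_a0)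
      then show "a0 w \<in> A \<and> a0 w \<noteq> w \<and> a0 (a0 w) = w" using a0_invol[OF wP] unfolding A_def by blast
    qed
    moreover have "even (card (A - {p1}))"
      using finA a1_pairs_face_component[OF ne np3] unfolding A_def
      by (intro even_card_involution[of _ a1]) simp_all
    moreover have "p1 \<in> A" using p_in_F unfolding A_def by simp
    ultimately show False using finA by (simp add: card_Diff_singleton)
  qed
  then show ?thesis using new_orbit_eq[of "[a0, b1, a2]" p1 p3] p1P by simp
qed

lemma card_created_touched:
  "2 * card (created [a0, a1, a2] [a0, b1, a2]) + card (touched [a1, a2]) + card (touched [a0, a1])
     \<le> 3 + card (created [a1, a2] [b1, a2]) + card (created [a0, a1] [a0, b1])"
proof -
  have card_le_2: "card {a, b} \<le> 2" for a b :: "nat set" by (cases "a = b") auto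
  have "card (touched [a1, a2]) \<le> card {V x, V (a0 x)}"
    by (rule card_mono[OF _ touched_vertices]) simp
  then have tv: "card (touched [a1, a2]) \<le> 2" using card_le_2 by (rule le_trans)
  have tf: "card (touched [a0, a1]) \<le> card {F x, F (a2 x)}"
    by (rule card_mono[OF _ touched_faces]) simp
  have "card Q = card (V' ` Q)" using card_image[OF inj_on_new_vertex] by simp
  also have "\<dots> \<le> card (created [a1, a2] [b1, a2])"
    by (rule card_mono[OF _ new_vertices]) (simp add: finite_orbits)
  finally have nv: "card Q \<le> card (created [a1, a2] [b1, a2])" .
  have nf: "card (F' ` Q) \<le> card (created [a0, a1] [a0, b1])"
    by (rule card_mono[OF _ new_faces]) (simp add: finite_orbits)
  have nc: "card (created [a0, a1, a2] [a0, b1, a2]) \<le> card (C' ` Q)"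
    by (rule card_mono[OF finite_imageI[OF finite_Q] new_components])
  have cQ: "card (C' ` Q) \<le> card Q" "card (C' ` Q) \<le> card (F' ` Q)"
    using card_image_le[OF finite_Q] card_new_components_le_faces by auto
  show ?thesis
  proof (cases "F x = F (a2 x)")
    case True
    then have "card (touched [a0, a1]) \<le> 1" using tf by simp
    then show ?thesis using tv nv nf nc cQ by linarith
  next
    case False
    have "p1 \<noteq> p3"
    proof
      assume "p1 = p3"
      then have "x = a0 x" using a1_invol[OF x_in] a1_invol[OF x0_in] by metis
      then show False using a0_invol[OF x_in] by simp
    qed
    moreover have "Q = {p1, p3}" using faces_distinct_p_notin_D[OF False] unfolding Q_def by auto
    ultimately have "card Q = 2" "card (C' ` Q) = 1"
      using faces_distinct_same_component[OF False] by auto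
    then show ?thesis using tv tf card_le_2[of "F x" "F (a2 x)"] nv nf nc cQ by linarith
  qed
qed

text \<open>In 2c - v + e - f the number of edges drops by one and at least one component is touched;
  card_created_touched controls the remaining terms.\<close>

lemma euler_genus_delete_le: "gem_euler_genus \<Psi> a0 b1 a2 \<le> gem_euler_genus \<Phi> a0 a1 a2"
proof -
  have "touched [a0, a1, a2] \<noteq> {}" using component_x_touched by blast
  then have components: "card (touched [a0, a1, a2]) \<ge> 1"
    using finite_orbits(1) by (simp add: Suc_le_eq card_gt_0_iff)
  have "orbits \<Phi> [a0, a2] \<noteq> {}" using x_in by (auto simp: orbits_def)
  then have edges: "card (orbits \<Phi> [a0, a2]) \<ge> 1"
    using finite_orbits(1) by (simp add: Suc_le_eq card_gt_0_iff)
  show ?thesis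
    unfolding gem_euler_genus_def
    using card_orbits_change[OF a1_replaced_V] card_orbits_change[OF a1_replaced_F]
      card_orbits_change[OF a1_replaced_C] card_edge_orbits_\<Psi> card_created_touched components edges
    by linarith
qed

end

section \<open>Gems of subgraphs\<close>

definition gem_embeds_into :: "('a \<times> 'a) set \<Rightarrow> (nat \<Rightarrow> 'a) \<Rightarrow> nat set \<Rightarrow>
    (nat \<Rightarrow> nat) \<Rightarrow> (nat \<Rightarrow> nat) \<Rightarrow> (nat \<Rightarrow> nat) \<Rightarrow> bool" where
  "gem_embeds_into E \<nu> \<Phi> a0 a1 a2 \<longleftrightarrow> gem \<Phi> a0 a1 a2 \<and>
     (\<forall>y\<in>\<Phi>. \<nu> (a1 y) = \<nu> y \<and> \<nu> (a2 y) = \<nu> y \<and> (\<nu> y, \<nu> (a0 y)) \<in> E) \<and>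
     (\<forall>y\<in>\<Phi>. \<forall>z\<in>\<Phi>. \<nu> y = \<nu> z \<longrightarrow> z \<in> orbit [a1, a2] y) \<and>
     (\<forall>y\<in>\<Phi>. \<forall>z\<in>\<Phi>. {\<nu> y, \<nu> (a0 y)} = {\<nu> z, \<nu> (a0 z)} \<longrightarrow> z \<in> orbit [a0, a2] y)"

definition gem_covers :: "('a \<times> 'a) set \<Rightarrow> (nat \<Rightarrow> 'a) \<Rightarrow> nat set \<Rightarrow> (nat \<Rightarrow> nat) \<Rightarrow> bool" where
  "gem_covers H \<nu> \<Phi> a0 \<longleftrightarrow> (\<forall>(u, v)\<in>H. \<exists>y\<in>\<Phi>. \<nu> y = u \<and> \<nu> (a0 y) = v)"

lemma gem_embeds_iff:
  "gem_embeds V E \<Phi> a0 a1 a2 \<nu> \<longleftrightarrow>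
     gem_embeds_into E \<nu> \<Phi> a0 a1 a2 \<and> gem_covers E \<nu> \<Phi> a0 \<and> (\<forall>y\<in>\<Phi>. \<nu> y \<in> V)"
  unfolding gem_embeds_def gem_embeds_into_def gem_covers_def by auto

lemma gem_coversD: "gem_covers H \<nu> \<Phi> a0 \<Longrightarrow> (u, v) \<in> H \<Longrightarrow> \<exists>y\<in>\<Phi>. \<nu> y = u \<and> \<nu> (a0 y) = v"
  unfolding gem_covers_def by (drule (1) bspec) simp

lemma gem_covers_mono: "gem_covers H \<nu> \<Phi> a0 \<Longrightarrow> H' \<subseteq> H \<Longrightarrow> gem_covers H' \<nu> \<Phi> a0"
  unfolding gem_covers_def by fastforce

lemma gem_embeds_into_label:
  assumes "gem_embeds_into E \<nu> \<Phi> a0 a1 a2" "y \<in> \<Phi>"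
  shows "\<nu> (a1 y) = \<nu> y" "\<nu> (a2 y) = \<nu> y" "(\<nu> y, \<nu> (a0 y)) \<in> E"
  using assms unfolding gem_embeds_into_def by blast+

lemma gem_embeds_into_vertex_orbit:
  assumes emb: "gem_embeds_into E \<nu> \<Phi> a0 a1 a2" and y: "y \<in> \<Phi>" and z: "z \<in> orbit [a1, a2] y"
  shows "\<nu> z = \<nu> y"
proof -
  have "orbit [a1, a2] y \<subseteq> {w \<in> \<Phi>. \<nu> w = \<nu> y}"
  proof (rule orbit_least)
    fix f w assume "f \<in> set [a1, a2]" "w \<in> {w \<in> \<Phi>. \<nu> w = \<nu> y}"
    then show "f w \<in> {w \<in> \<Phi>. \<nu> w = \<nu> y}"
      using emb unfolding gem_embeds_into_def gem_def invol_on_def by auto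
  qed (use y in simp)
  then show ?thesis using z by blast
qed

lemma gem_embeds_into_loopless:
  assumes emb: "gem_embeds_into E \<nu> \<Phi> a0 a1 a2" and irr: "\<forall>u. (u, u) \<notin> E" and y: "y \<in> \<Phi>"
  shows "a0 y \<notin> orbit [a1, a2] y"
proof
  assume "a0 y \<in> orbit [a1, a2] y"
  then have "\<nu> (a0 y) = \<nu> y" by (rule gem_embeds_into_vertex_orbit[OF emb y])
  with gem_embeds_into_label(3)[OF emb y] show False using irr by simp
qed

lemma (in gem_edge_deletion) gem_embeds_into_\<Psi>:
  assumes emb: "gem_embeds_into E \<nu> \<Phi> a0 a1 a2"
  shows "gem_embeds_into E \<nu> \<Psi> a0 b1 a2"
  unfolding gem_embeds_into_def
proof (intro conjI ballI impI)
  note \<nu> = gem_embeds_into_label[OF emb]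
  show "gem \<Psi> a0 b1 a2" by (rule gem_\<Psi>)
  fix y assume y: "y \<in> \<Psi>"
  then have yP: "y \<in> \<Phi>" using \<Psi>_subset by blast
  have "a1 y \<in> \<Phi>" "a2 (a1 y) \<in> \<Phi>" using a1_invol[OF yP] a2_invol by auto
  then show "\<nu> (b1 y) = \<nu> y" using \<nu> yP unfolding b1_def by simp
  show "\<nu> (a2 y) = \<nu> y" "(\<nu> y, \<nu> (a0 y)) \<in> E" using \<nu>[OF yP] by simp_all
  fix z assume z: "z \<in> \<Psi>"
  then have zP: "z \<in> \<Phi>" using \<Psi>_subset by blast
  show "z \<in> orbit [b1, a2] y" if "\<nu> y = \<nu> z"
    using mem_new_vertex_if_mem_vertex[OF y z] emb yP zP that by (simp add: gem_embeds_into_def)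
  show "z \<in> orbit [a0, a2] y" if "{\<nu> y, \<nu> (a0 y)} = {\<nu> z, \<nu> (a0 z)}"
    using emb yP zP that by (simp add: gem_embeds_into_def)
qed

lemma (in gem_edge_deletion) gem_covers_\<Psi>:
  assumes emb: "gem_embeds_into E \<nu> \<Phi> a0 a1 a2" and cov: "gem_covers H \<nu> \<Phi> a0"
    and "sym H" and x_not_H: "(\<nu> x, \<nu> (a0 x)) \<notin> H"
  shows "gem_covers H \<nu> \<Psi> a0"
  unfolding gem_covers_def
proof (intro ballI, clarify)
  fix u v assume uv: "(u, v) \<in> H"
  then obtain y where y: "y \<in> \<Phi>" "\<nu> y = u" "\<nu> (a0 y) = v"
    using gem_coversD[OF cov] by blast
  have x2: "\<nu> (a2 x) = \<nu> x" "\<nu> (a0 (a2 x)) = \<nu> (a0 x)"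
    using gem_embeds_into_label(2)[OF emb x_in] gem_embeds_into_label(2)[OF emb x0_in]
      a0_a2_comm[OF x_in] by simp_all
  have "y \<notin> D"
  proof
    assume "y \<in> D"
    then consider "y = x" | "y = a0 x" | "y = a2 x" | "y = a0 (a2 x)" unfolding D_def by blast
    then have "{u, v} = {\<nu> x, \<nu> (a0 x)}"
      using y x2 a0_invol[OF x_in] a0_invol[OF x2_in] by cases auto
    then have "(u, v) = (\<nu> x, \<nu> (a0 x)) \<or> (v, u) = (\<nu> x, \<nu> (a0 x))"
      by (auto simp: doubleton_eq_iff)
    then show False
    proof
      assume "(u, v) = (\<nu> x, \<nu> (a0 x))"
      then show False using uv x_not_H by simp
    next
      assume "(v, u) = (\<nu> x, \<nu> (a0 x))"
      then show False using symD[OF \<open>sym H\<close> uv] x_not_H by simp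
    qed
  qed
  then show "\<exists>y\<in>\<Psi>. \<nu> y = u \<and> \<nu> (a0 y) = v" using y by (auto simp: \<Psi>_def)
qed

lemma gem_embeds_into_restrict:
  assumes "gem_embeds_into E \<nu> \<Phi> a0 a1 a2" "gem_covers H \<nu> \<Phi> a0"
    and irr: "\<forall>u. (u, u) \<notin> E" and "sym H"
  shows "\<exists>\<Phi>' a1'. gem_embeds_into E \<nu> \<Phi>' a0 a1' a2 \<and> gem_covers H \<nu> \<Phi>' a0 \<and>
           (\<forall>y\<in>\<Phi>'. (\<nu> y, \<nu> (a0 y)) \<in> H) \<and> gem_euler_genus \<Phi>' a0 a1' a2 \<le> gem_euler_genus \<Phi> a0 a1 a2"
  using assms(1,2)
proof (induction "card \<Phi>" arbitrary: \<Phi> a1 rule: less_induct)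
  case less
  show ?case
  proof (cases "\<forall>y\<in>\<Phi>. (\<nu> y, \<nu> (a0 y)) \<in> H")
    case True
    then show ?thesis using less.prems by blast
  next
    case False
    then obtain x where x: "x \<in> \<Phi>" "(\<nu> x, \<nu> (a0 x)) \<notin> H" by blast
    interpret d: gem_edge_deletion \<Phi> a0 a1 a2 x
      using less.prems(1) x(1) gem_embeds_into_loopless[OF less.prems(1) irr]
      by unfold_locales (auto simp: gem_embeds_into_def)
    have "card d.\<Psi> < card \<Phi>"
      using d.finite_darts x(1) by (auto simp: d.\<Psi>_def d.D_def intro: psubset_card_mono)
    then obtain \<Phi>' a1' where "gem_embeds_into E \<nu> \<Phi>' a0 a1' a2" "gem_covers H \<nu> \<Phi>' a0"
        "\<forall>y\<in>\<Phi>'. (\<nu> y, \<nu> (a0 y)) \<in> H" "gem_euler_genus \<Phi>' a0 a1' a2 \<le> gem_euler_genus d.\<Psi> a0 d.b1 a2"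
      using less.hyps d.gem_embeds_into_\<Psi>[OF less.prems(1)]
        d.gem_covers_\<Psi>[OF less.prems \<open>sym H\<close> x(2)] by blast
    then show ?thesis using d.euler_genus_delete_le by (meson order_trans)
  qed
qed

lemma card_orbits_UN:
  assumes "finite I" "\<And>i. i \<in> I \<Longrightarrow> finite (P i)" "\<And>i. i \<in> I \<Longrightarrow> involutions_on (P i) fs"
    and "disjoint_family_on P I"
  shows "card (orbits (\<Union>i\<in>I. P i) fs) = (\<Sum>i\<in>I. card (orbits (P i) fs))"
proof -
  have "orbits (\<Union>i\<in>I. P i) fs = (\<Union>i\<in>I. orbits (P i) fs)" unfolding orbits_def by blast
  moreover have "orbits (P i) fs \<inter> orbits (P j) fs = {}" if "i \<in> I" "j \<in> I" "i \<noteq> j" for i j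
  proof (rule ccontr)
    assume "orbits (P i) fs \<inter> orbits (P j) fs \<noteq> {}"
    then obtain y z where y: "y \<in> P i" and z: "z \<in> P j" and "orbit fs y = orbit fs z"
      unfolding orbits_def by blast
    then have "z \<in> P i" using orbit_subset[OF assms(3)[OF \<open>i \<in> I\<close>] y] orbit_refl[of z fs] by blast
    then show False using z assms(4) that unfolding disjoint_family_on_def by blast
  qed
  ultimately show ?thesis
    using assms(1,2) by (simp add: card_UN_disjoint orbits_def)
qed

lemma gem_euler_genus_UN:
  assumes "finite I" "\<And>i. i \<in> I \<Longrightarrow> gem (P i) a0 a1 a2" "disjoint_family_on P I"
  shows "gem_euler_genus (\<Union>i\<in>I. P i) a0 a1 a2 = (\<Sum>i\<in>I. gem_euler_genus (P i) a0 a1 a2)"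
proof -
  have "int (card (orbits (\<Union>i\<in>I. P i) fs)) = (\<Sum>i\<in>I. int (card (orbits (P i) fs)))"
    if "set fs \<subseteq> {a0, a1, a2}" for fs
    using card_orbits_UN[OF assms(1) _ gem_involutions_on[OF assms(2) that] assms(3)] assms(2)
    by (simp add: gem_def)
  from this[of "[a0, a1, a2]"] this[of "[a1, a2]"] this[of "[a0, a2]"] this[of "[a0, a1]"]
  show ?thesis
    unfolding gem_euler_genus_def by (simp add: sum.distrib sum_subtractf sum_distrib_left)
qed

lemma gem_embeds_induced:
  assumes emb: "gem_embeds_into E \<nu> \<Phi> a0 a1 a2" and cov: "gem_covers (induced E B) \<nu> \<Phi> a0"
    and inside: "\<And>y. y \<in> \<Phi> \<Longrightarrow> \<nu> y \<in> B \<Longrightarrow> \<nu> (a0 y) \<in> B"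
  shows "gem_embeds B (induced E B) {y \<in> \<Phi>. \<nu> y \<in> B} a0 a1 a2 \<nu>"
  unfolding gem_embeds_iff
proof (intro conjI)
  let ?P = "{y \<in> \<Phi>. \<nu> y \<in> B}"
  have g: "gem \<Phi> a0 a1 a2" and \<nu>: "\<forall>y\<in>\<Phi>. \<nu> (a1 y) = \<nu> y \<and> \<nu> (a2 y) = \<nu> y \<and> (\<nu> y, \<nu> (a0 y)) \<in> E"
    using emb by (simp_all add: gem_embeds_into_def)
  have "gem ?P a0 a1 a2"
    using g \<nu> inside unfolding gem_def invol_on_def by auto
  then show "gem_embeds_into (induced E B) \<nu> ?P a0 a1 a2"
    using emb inside unfolding gem_embeds_into_def induced_def by auto
  show "gem_covers (induced E B) \<nu> ?P a0"
    unfolding gem_covers_def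
  proof (intro ballI, clarify)
    fix u v assume uv: "(u, v) \<in> induced E B"
    then obtain y where "y \<in> \<Phi>" "\<nu> y = u" "\<nu> (a0 y) = v" using gem_coversD[OF cov] by blast
    then show "\<exists>y\<in>?P. \<nu> y = u \<and> \<nu> (a0 y) = v" using uv by (auto simp: induced_def)
  qed
qed simp

lemma euler_genus_le_subgraph_gem:
  assumes "sgraph V E" "euler_genus_le V E g" "H \<subseteq> E" "sym H"
  obtains \<Phi> a0 a1 a2 \<nu> where "gem_embeds_into E \<nu> \<Phi> a0 a1 a2" "gem_covers H \<nu> \<Phi> a0"
    "\<forall>y\<in>\<Phi>. (\<nu> y, \<nu> (a0 y)) \<in> H" "gem_euler_genus \<Phi> a0 a1 a2 \<le> int g"
proof -
  obtain \<Phi> a0 a1 a2 \<nu> where emb: "gem_embeds V E \<Phi> a0 a1 a2 \<nu>"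
    and genus: "gem_euler_genus \<Phi> a0 a1 a2 \<le> int g"
    using assms(2) unfolding euler_genus_le_def by blast
  have irr: "\<forall>u. (u, u) \<notin> E" using assms(1) by (simp add: sgraph_def)
  have emb_into: "gem_embeds_into E \<nu> \<Phi> a0 a1 a2" using emb by (simp add: gem_embeds_iff)
  have cov: "gem_covers H \<nu> \<Phi> a0" using emb gem_covers_mono assms(3) by (auto simp: gem_embeds_iff)
  obtain \<Phi>' a1' where r: "gem_embeds_into E \<nu> \<Phi>' a0 a1' a2" "gem_covers H \<nu> \<Phi>' a0"
      "\<forall>y\<in>\<Phi>'. (\<nu> y, \<nu> (a0 y)) \<in> H" "gem_euler_genus \<Phi>' a0 a1' a2 \<le> gem_euler_genus \<Phi> a0 a1 a2"
    using gem_embeds_into_restrict[OF emb_into cov irr \<open>sym H\<close>] by blast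
  show thesis by (rule that[OF r(1-3)]) (use r(4) genus in simp)
qed

lemma induced_UN_disjoint_mem:
  assumes disj: "disjoint_family_on B I" and ab: "(a, b) \<in> (\<Union>i\<in>I. induced E (B i))"
    and "i \<in> I" "a \<in> B i"
  shows "b \<in> B i"
proof -
  obtain j where j: "j \<in> I" "a \<in> B j" "b \<in> B j" using ab by (auto simp: induced_def)
  have "i = j"
  proof (rule ccontr)
    assume "i \<noteq> j"
    then have "B i \<inter> B j = {}" using disj \<open>i \<in> I\<close> j(1) by (simp add: disjoint_family_on_def)
    then show False using \<open>a \<in> B i\<close> j(2) by blast
  qed
  then show ?thesis using j(3) by simp
qed

lemma disjoint_nonplanar_not_euler_genus_le:
  assumes "sgraph V E" and disj: "disjoint_family_on B {..g}"
    and nonplanar: "\<And>i. i \<le> g \<Longrightarrow> \<not> planar (B i) (induced E (B i))"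
  shows "\<not> euler_genus_le V E g"
proof
  assume "euler_genus_le V E g"
  define H where "H = (\<Union>i\<le>g. induced E (B i))"
  have "sym E" using assms(1) by (simp add: sgraph_def)
  then have "sym H" unfolding H_def induced_def sym_def by blast
  have "H \<subseteq> E" unfolding H_def induced_def by blast
  obtain \<Phi> a0 a1 a2 \<nu> where emb: "gem_embeds_into E \<nu> \<Phi> a0 a1 a2"
      and cov: "gem_covers H \<nu> \<Phi> a0" and in_H: "\<forall>y\<in>\<Phi>. (\<nu> y, \<nu> (a0 y)) \<in> H"
      and genus: "gem_euler_genus \<Phi> a0 a1 a2 \<le> int g"
    by (rule euler_genus_le_subgraph_gem[OF assms(1) \<open>euler_genus_le V E g\<close> \<open>H \<subseteq> E\<close> \<open>sym H\<close>])
  define P where "P i = {y \<in> \<Phi>. \<nu> y \<in> B i}" for i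
  have inside: "\<nu> (a0 y) \<in> B i" if "y \<in> \<Phi>" "i \<le> g" "\<nu> y \<in> B i" for y i
  proof -
    have "(\<nu> y, \<nu> (a0 y)) \<in> (\<Union>i\<in>{..g}. induced E (B i))" using in_H that(1) unfolding H_def by blast
    then show ?thesis using induced_UN_disjoint_mem[OF disj] that(2,3) by simp
  qed
  have pieces: "gem_embeds (B i) (induced E (B i)) (P i) a0 a1 a2 \<nu>" if "i \<le> g" for i
  proof -
    have "induced E (B i) \<subseteq> H" unfolding H_def using that by blast
    then show ?thesis
      unfolding P_def using gem_covers_mono[OF cov] inside that
      by (intro gem_embeds_induced[OF emb]) auto
  qed
  have "\<Phi> = (\<Union>i\<le>g. P i)" using in_H unfolding P_def H_def induced_def by blast
  moreover have "disjoint_family_on P {..g}"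
    using disj unfolding P_def disjoint_family_on_def by blast
  ultimately have "gem_euler_genus \<Phi> a0 a1 a2 = (\<Sum>i\<le>g. gem_euler_genus (P i) a0 a1 a2)"
    using gem_euler_genus_UN[of "{..g}" P] pieces by (simp add: gem_embeds_def)
  also have "\<dots> \<ge> (\<Sum>i\<le>g. 1)"
  proof (rule sum_mono)
    fix i assume "i \<in> {..g}"
    then have "\<not> gem_euler_genus (P i) a0 a1 a2 \<le> int 0"
      using pieces nonplanar unfolding planar_def euler_genus_le_def by blast
    then show "gem_euler_genus (P i) a0 a1 a2 \<ge> 1" by simp
  qed
  finally show False using genus by simp
qed

lemma relpow_sym: "sym E \<Longrightarrow> (u, v) \<in> E ^^ n \<Longrightarrow> (v, u) \<in> E ^^ n"
proof (induction n arbitrary: v)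
  case (Suc n)
  from Suc.prems(2) obtain y where "(u, y) \<in> E ^^ n" "(y, v) \<in> E" by (rule relpow_Suc_E)
  then have "(y, u) \<in> E ^^ n" "(v, y) \<in> E" using Suc.IH Suc.prems(1) by (auto dest: symD)
  then show ?case by (rule relpow_Suc_I2[rotated])
qed simp

lemma gdist_le: "(u, v) \<in> E ^^ n \<Longrightarrow> gdist E u v \<le> enat n"
  unfolding gdist_def by (auto intro: Least_le)

lemma gdist_enatD:
  assumes "gdist E u v = enat n"
  shows "(u, v) \<in> E ^^ n"
proof -
  have ex: "\<exists>k. (u, v) \<in> E ^^ k" using assms by (auto simp: gdist_def split: if_splits)
  then have "n = (LEAST k. (u, v) \<in> E ^^ k)" using assms by (simp add: gdist_def)
  then show ?thesis using LeastI_ex[OF ex] by simp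
qed

lemma gdist_self: "gdist E u u = 0"
  using gdist_le[of u u 0 E] by (simp add: zero_enat_def[symmetric])

lemma gdist_triangle_enat:
  "gdist E u v \<le> enat a \<Longrightarrow> gdist E v w \<le> enat b \<Longrightarrow> gdist E u w \<le> enat (a + b)"
proof -
  assume "gdist E u v \<le> enat a" "gdist E v w \<le> enat b"
  then obtain a' b' where "gdist E u v = enat a'" "gdist E v w = enat b'" "a' \<le> a" "b' \<le> b"
    by (cases "gdist E u v"; cases "gdist E v w") auto
  then have "(u, w) \<in> E ^^ (a' + b')" by (auto simp: relpow_add dest!: gdist_enatD)
  then have "gdist E u w \<le> enat (a' + b')" by (rule gdist_le)
  also have "\<dots> \<le> enat (a + b)" using \<open>a' \<le> a\<close> \<open>b' \<le> b\<close> by simp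
  finally show "gdist E u w \<le> enat (a + b)" .
qed

lemma gdist_sym:
  assumes "sym E"
  shows "gdist E u v = gdist E v u"
proof -
  have "(u, v) \<in> E ^^ k \<longleftrightarrow> (v, u) \<in> E ^^ k" for k using relpow_sym[OF assms] by blast
  then show ?thesis unfolding gdist_def by simp
qed

lemma gdist_intermediate:
  assumes "R \<subseteq> E" "(u, v) \<in> R\<^sup>*" "enat m \<le> gdist E u v"
  shows "\<exists>w. (u, w) \<in> R\<^sup>* \<and> gdist E u w = enat m"
  using assms(2,3)
proof (induction rule: rtrancl_induct)
  case base
  then show ?case using gdist_self[of E u] by (auto simp: zero_enat_def)
next
  case (step y z)
  show ?case
  proof (cases "enat m \<le> gdist E u y")
    case True
    then show ?thesis using step.IH by simp
  next
    case False
    then obtain k where k: "gdist E u y = enat k" "k < m" by (cases "gdist E u y") auto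
    have "gdist E y z \<le> enat 1" using step(2) assms(1) by (intro gdist_le) auto
    then have "gdist E u z \<le> enat (k + 1)" using gdist_triangle_enat[of E u y k z 1] k by simp
    also have "\<dots> \<le> enat m" using k(2) by simp
    finally have "gdist E u z \<le> enat m" .
    then have "gdist E u z = enat m" using step.prems by simp
    then show ?thesis using step(1,2) by (meson rtrancl.rtrancl_into_rtrancl)
  qed
qed

section \<open>Components of the non-planar region\<close>

lemma components_rtrancl:
  assumes "K \<in> components N R" "sym R" "u \<in> K" "v \<in> K"
  shows "(u, v) \<in> R\<^sup>*"
proof -
  obtain k where "K = {w \<in> N. (k, w) \<in> R\<^sup>*}" using assms(1) unfolding components_def by blast
  then have "(u, k) \<in> R\<^sup>*" "(k, v) \<in> R\<^sup>*"
    using assms(3,4) sym_rtrancl[OF assms(2)] by (auto dest: symD)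
  then show ?thesis by (rule rtrancl_trans)
qed

lemma components_subset: "K \<in> components N R \<Longrightarrow> K \<subseteq> N"
  unfolding components_def by blast

lemma rtrancl_induced_mem: "(u, w) \<in> (induced E N)\<^sup>* \<Longrightarrow> u \<in> N \<Longrightarrow> w \<in> N"
  by (induction rule: rtrancl_induct) (auto simp: induced_def)

lemma nbhd_disjoint_if_far:
  assumes "sym E" "gdist E p w \<le> enat r" "gdist E q w' \<le> enat r"
    and "gdist E u w \<le> enat a" "gdist E u w' = enat b" "a + 2 * T + 2 * r < b"
  shows "nbhd V E T {p} \<inter> nbhd V E T {q} = {}"
proof (rule ccontr)
  assume "nbhd V E T {p} \<inter> nbhd V E T {q} \<noteq> {}"
  then obtain y where "gdist E p y \<le> enat T" "gdist E q y \<le> enat T"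
    unfolding nbhd_def by auto
  then have "gdist E w y \<le> enat (r + T)" "gdist E y w' \<le> enat (T + r)"
    using assms(2,3) gdist_sym[OF assms(1)] gdist_triangle_enat by metis+
  then have "gdist E w w' \<le> enat (r + T + (T + r))" by (rule gdist_triangle_enat)
  with assms(4) have "gdist E u w' \<le> enat (a + (r + T + (T + r)))" by (rule gdist_triangle_enat)
  then show False using assms(5,6) by simp
qed

lemma component_point_at_distance:
  assumes "sym E" "K \<in> components N (induced E N)" "u \<in> K" "v \<in> K" "enat m \<le> gdist E u v"
  obtains w where "w \<in> N" "gdist E u w = enat m"
proof -
  have "sym (induced E N)" using assms(1) unfolding induced_def sym_def by blast
  with assms(2) have "(u, v) \<in> (induced E N)\<^sup>*" using assms(3,4) by (rule components_rtrancl)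
  moreover have "induced E N \<subseteq> E" by (auto simp: induced_def)
  ultimately obtain w where w: "(u, w) \<in> (induced E N)\<^sup>*" "gdist E u w = enat m"
    using gdist_intermediate[OF _ _ assms(5)] by blast
  have "u \<in> N" using components_subset[OF assms(2)] assms(3) by blast
  with w(1) have "w \<in> N" by (rule rtrancl_induced_mem)
  then show thesis using that w(2) by blast
qed

lemma disjoint_family_on_atMost:
  fixes g :: nat
  assumes "\<And>i j. i < j \<Longrightarrow> j \<le> g \<Longrightarrow> A i \<inter> A j = {}"
  shows "disjoint_family_on A {..g}"
  unfolding disjoint_family_on_def
proof (intro ballI impI)
  fix i j assume "i \<in> {..g}" "j \<in> {..g}" "i \<noteq> j"
  then have "i < j \<and> j \<le> g \<or> j < i \<and> i \<le> g" by auto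
  then show "A i \<inter> A j = {}" using assms[of i j] assms[of j i] by blast
qed

lemma component_dist_lt:
  fixes T \<rho> g :: nat
  assumes sg: "sgraph V E" and genus: "euler_genus_le V E g"
    and X: "X = {u \<in> V. \<not> planar (nbhd V E T {u}) (induced E (nbhd V E T {u}))}"
    and N: "N = nbhd V E (2 * \<rho>) X"
    and K: "K \<in> components N (induced E N)" and "u \<in> K" "v \<in> K"
  shows "gdist E u v < enat (g * (2 * T + 4 * \<rho> + 1))"
proof (rule ccontr)
  define s where "s = 2 * T + 4 * \<rho> + 1"
  assume "\<not> gdist E u v < enat (g * (2 * T + 4 * \<rho> + 1))"
  then have far: "enat (g * s) \<le> gdist E u v" unfolding s_def by (simp add: not_less)
  have "sym E" using sg by (simp add: sgraph_def)
  have "\<exists>p. j \<le> g \<longrightarrow> p \<in> X \<and> (\<exists>w. gdist E u w = enat (j * s) \<and> gdist E p w \<le> enat (2 * \<rho>))" for j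
  proof (cases "j \<le> g")
    case True
    then have "enat (j * s) \<le> enat (g * s)" by simp
    then have "enat (j * s) \<le> gdist E u v" using far by (rule order_trans)
    then obtain w where "w \<in> N" "gdist E u w = enat (j * s)"
      by (rule component_point_at_distance[OF \<open>sym E\<close> K \<open>u \<in> K\<close> \<open>v \<in> K\<close>])
    then show ?thesis unfolding N nbhd_def by blast
  qed simp
  then obtain p where p: "\<forall>j. j \<le> g \<longrightarrow> p j \<in> X \<and>
      (\<exists>w. gdist E u w = enat (j * s) \<and> gdist E (p j) w \<le> enat (2 * \<rho>))"
    by (rule choice[THEN exE, OF allI])
  have "disjoint_family_on (\<lambda>j. nbhd V E T {p j}) {..g}"
  proof (rule disjoint_family_on_atMost)
    fix i j :: nat assume ij: "i < j" "j \<le> g"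
    obtain wi where wi: "gdist E u wi = enat (i * s)" "gdist E (p i) wi \<le> enat (2 * \<rho>)"
      using p[rule_format, of i] ij by auto
    obtain wj where wj: "gdist E u wj = enat (j * s)" "gdist E (p j) wj \<le> enat (2 * \<rho>)"
      using p[rule_format, of j] ij by auto
    have "(i + 1) * s \<le> j * s" using ij by (intro mult_right_mono) auto
    then have "i * s + 2 * T + 2 * (2 * \<rho>) < j * s" unfolding s_def by (simp add: algebra_simps)
    then show "nbhd V E T {p i} \<inter> nbhd V E T {p j} = {}"
      using nbhd_disjoint_if_far[OF \<open>sym E\<close> wi(2) wj(2) eq_refl[OF wi(1)] wj(1)] by simp
  qed
  moreover have "\<not> planar (nbhd V E T {p j}) (induced E (nbhd V E T {p j}))" if "j \<le> g" for j
    using p that X by simp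
  ultimately show False
    using disjoint_nonplanar_not_euler_genus_le[OF sg] genus by blast
qed

lemma weak_diam_component_le:
  fixes T \<rho> g :: nat
  assumes "sgraph V E" "euler_genus_le V E g"
    and "X = {u \<in> V. \<not> planar (nbhd V E T {u}) (induced E (nbhd V E T {u}))}"
    and "N = nbhd V E (2 * \<rho>) X"
    and "K \<in> components N (induced E N)"
  shows "weak_diam E K \<le> enat (g * (2 * T + 4 * \<rho> + 1) - 1)"
  unfolding weak_diam_def
proof (rule Sup_least)
  fix d assume "d \<in> {gdist E u v |u v. u \<in> K \<and> v \<in> K}"
  then obtain u v where "u \<in> K" "v \<in> K" "d = gdist E u v" by blast
  then have "d < enat (g * (2 * T + 4 * \<rho> + 1))" using component_dist_lt[OF assms] by simp
  then show "d \<le> enat (g * (2 * T + 4 * \<rho> + 1) - 1)" by (cases d) auto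
qed

theorem mainTheorem12:
  fixes g T \<rho> :: nat and V :: "'a set" and E :: "('a \<times> 'a) set"
  assumes "g \<ge> 1"
    and "sgraph V E"
    and "euler_genus_le V E g"
  shows "(let X = {u \<in> V. \<not> planar (nbhd V E T {u}) (induced E (nbhd V E T {u}))};
              N = nbhd V E (2 * \<rho>) X
          in \<forall>K \<in> components N (induced E N). weak_diam E K < enat (g * (2 * T + 4 * \<rho> + 1)))
       \<and> (\<exists>\<delta>::nat. \<delta> < g * (2 * T + 4 * \<rho> + 1) \<and>
            locally_nice T \<delta> \<rho> {(V', E'). sgraph V' E' \<and> euler_genus_le V' E' g}
                               {(V', E'). planar V' E'})"
proof -
  define \<delta> where "\<delta> = g * (2 * T + 4 * \<rho> + 1) - 1"
  have \<delta>: "\<delta> < g * (2 * T + 4 * \<rho> + 1)" using \<open>g \<ge> 1\<close> unfolding \<delta>_def by simp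
  have diam: "\<forall>K \<in> components N (induced E' N). weak_diam E' K \<le> enat \<delta>"
    if "sgraph V' E'" "euler_genus_le V' E' g"
      "X = {u \<in> V'. \<not> planar (nbhd V' E' T {u}) (induced E' (nbhd V' E' T {u}))}"
      "N = nbhd V' E' (2 * \<rho>) X" for V' E' X N
    using weak_diam_component_le[OF that] unfolding \<delta>_def by blast
  have "locally_nice T \<delta> \<rho> {(V', E'). sgraph V' E' \<and> euler_genus_le V' E' g}
      {(V', E'). planar V' E'}"
    unfolding locally_nice_def Let_def using diam[OF _ _ refl refl] by auto
  moreover have "enat \<delta> < enat (g * (2 * T + 4 * \<rho> + 1))" using \<delta> by simp
  ultimately show ?thesis
    using diam[OF assms(2,3) refl refl] \<delta> unfolding Let_def by (blast intro: le_less_trans)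
qed

end
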